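(* In the tabular setting with possibly stochastic empirical dynamics, every maximizer $\pi^*$ of $\bar R(\pi)$ and every maximizer $\pi_1^*$ of $\bar R_1(\pi)$ over all policies satisfy $$\operatorname{supp}(\pi^*(\cdot\mid s))\subseteq\operatorname{supp}(\beta(\cdot\mid s))\quad\text{and}\quad \operatorname{supp}(\pi_1^*(\cdot\mid s))\subseteq\operatorname{supp}(\beta(\cdot\mid s))\qquad\text{for all } s\in\mathcal D.$$
   Context: Finite state space $\mathcal S$ and finite action space $\mathcal A$. $\mathcal D$ is a finite dataset of transitions $(s,a,s')$; "$s\in\mathcal D$" means $s$ occurs as the first component of some transition. $\beta(a\mid s)$ is the empirical behavior policy (fraction of transitions from $s$ with action $a$). $M(s'\mid s,a)$ is the empirical dynamics model: the fraction of transitions from $(s,a)$ ending in $s'$ if $(s,a)$ occurs in $\mathcal D$, and $0$ otherwise. $N(s'\mid s)=\sum_a\beta(a\mid s)M(s'\mid s,a)$. $V:\mathcal S\to\mathbb R$ is a fixed real function and $\alpha\ge 0$ a constant. $Z(s)=\sum_{s'}\exp(\alpha V(s'))N(s'\mid s)$. A policy $\pi$ assigns a distribution $\pi(\cdot\mid s)$ on $\mathcal A$ to each state; $M(s'\mid s,\pi(\cdot\mid s)):=\sum_a\pi(a\mid s)M(s'\mid s,a)$. $\mathbb E_{(s,s')\sim\mathcal D}$ denotes the average over the transitions of $\mathcal D$. The objectives (with $\log 0=-\infty$) are $$\bar R(\pi)=\mathbb E_{(s,s')\sim\mathcal D}\Big[\tfrac{\exp(\alpha V(s'))}{Z(s)}\log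 M(s'\mid s,\pi(\cdot\mid s))\Big],\qquad \bar R_1(\pi)=\mathbb E_{(s,s')\sim\mathcal D}\Big[\tfrac{\exp(\alpha V(s'))}{\exp(\alpha V(s))}\log M(s'\mid s,\pi(\cdot\mid s))\Big].$$ *)

theory Defs
  imports "HOL-Probability.Probability"
begin

type_synonym ('s, 'a) dataset = "('s \<times> 'a \<times> 's) list"

definition cnt_s :: "('s, 'a) dataset \<Rightarrow> 's \<Rightarrow> nat" where
  "cnt_s D s = length (filter (\<lambda>(x, b, y). x = s) D)"

definition cnt_sa :: "('s, 'a) dataset \<Rightarrow> 's \<Rightarrow> 'a \<Rightarrow> nat" where
  "cnt_sa D s a = length (filter (\<lambda>(x, b, y). x = s \<and> b = a) D)"

definition cnt_sas :: "('s, 'a) dataset \<Rightarrow> 's \<Rightarrow> 'a \<Rightarrow> 's \<Rightarrow> nat" where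
  "cnt_sas D s a s' = length (filter (\<lambda>(x, b, y). x = s \<and> b = a \<and> y = s') D)"

text \<open>Empirical behaviour policy (set to 0 at states not occurring in D, where it is irrelevant).\<close>
definition beta :: "('s, 'a) dataset \<Rightarrow> 's \<Rightarrow> 'a \<Rightarrow> real" where
  "beta D s a = (if cnt_s D s = 0 then 0 else real (cnt_sa D s a) / real (cnt_s D s))"

definition Mdl :: "('s, 'a) dataset \<Rightarrow> 's \<Rightarrow> 'a \<Rightarrow> 's \<Rightarrow> real" where
  "Mdl D s a s' = (if cnt_sa D s a = 0 then 0 else real (cnt_sas D s a s') / real (cnt_sa D s a))"

definition Nmdl :: "('s, 'a::finite) dataset \<Rightarrow> 's \<Rightarrow> 's \<Rightarrow> real" where
  "Nmdl D s s' = (\<Sum>a\<in>UNIV. beta D s a * Mdl D s a s')"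

definition Zfun :: "('s::finite, 'a::finite) dataset \<Rightarrow> real \<Rightarrow> ('s \<Rightarrow> real) \<Rightarrow> 's \<Rightarrow> real" where
  "Zfun D \<alpha> V s = (\<Sum>s'\<in>UNIV. exp (\<alpha> * V s') * Nmdl D s s')"

definition Mpol :: "('s, 'a::finite) dataset \<Rightarrow> ('s \<Rightarrow> 'a pmf) \<Rightarrow> 's \<Rightarrow> 's \<Rightarrow> real" where
  "Mpol D \<pi> s s' = (\<Sum>a\<in>UNIV. pmf (\<pi> s) a * Mdl D s a s')"

text \<open>Logarithm with the convention log 0 = -\<infinity> (arguments here are always \<ge> 0).\<close>
definition elog :: "real \<Rightarrow> ereal" where
  "elog x = (if x > 0 then ereal (ln x) else -\<infinity>)"

definition avgD :: "('s, 'a) dataset \<Rightarrow> ('s \<times> 'a \<times> 's \<Rightarrow> ereal) \<Rightarrow> ereal" where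
  "avgD D f = (if D = [] then 0 else ereal (1 / real (length D)) * sum_list (map f D))"

definition Rbar :: "('s::finite, 'a::finite) dataset \<Rightarrow> real \<Rightarrow> ('s \<Rightarrow> real) \<Rightarrow> ('s \<Rightarrow> 'a pmf) \<Rightarrow> ereal" where
  "Rbar D \<alpha> V \<pi> = avgD D (\<lambda>(s, a, s').
     ereal (exp (\<alpha> * V s') / Zfun D \<alpha> V s) * elog (Mpol D \<pi> s s'))"

definition Rbar1 :: "('s::finite, 'a::finite) dataset \<Rightarrow> real \<Rightarrow> ('s \<Rightarrow> real) \<Rightarrow> ('s \<Rightarrow> 'a pmf) \<Rightarrow> ereal" where
  "Rbar1 D \<alpha> V \<pi> = avgD D (\<lambda>(s, a, s').
     ereal (exp (\<alpha> * V s') / exp (\<alpha> * V s)) * elog (Mpol D \<pi> s s'))"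

end

theory Submission
  imports Defs
begin

text \<open>Both objectives are averages of \<open>w s s' \<cdot> log M(s' | s, \<pi>)\<close> with weights \<open>w > 0\<close> on the
  transitions of \<open>D\<close>. The uniform policy on the actions seen in \<open>D\<close> makes every term finite, so a
  maximiser gives positive probability to every observed transition. If it also put mass \<open>q > 0\<close>
  on an unseen action at some \<open>s \<in> D\<close>, conditioning \<open>\<pi>(\<cdot> | s)\<close> on the seen actions would divide
  every \<open>M(s' | s, \<pi>)\<close> by \<open>1 - q < 1\<close>, since the empirical model vanishes on unseen actions, and
  strictly increase the objective.\<close>

definition seen_actions :: "('s, 'a) dataset \<Rightarrow> 's \<Rightarrow> 'a set" where
  "seen_actions D s = {a. cnt_sa D s a \<noteq> 0}"

definition weighted_loglik ::
    "('s, 'a::finite) dataset \<Rightarrow> ('s \<Rightarrow> 's \<Rightarrow> real) \<Rightarrow> ('s \<Rightarrow> 'a pmf) \<Rightarrow> ereal" where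
  "weighted_loglik D w \<pi> = avgD D (\<lambda>(s, a, s'). ereal (w s s') * elog (Mpol D \<pi> s s'))"

lemma cnt_s_eq_0_iff: "cnt_s D s = 0 \<longleftrightarrow> s \<notin> fst ` set D"
  unfolding cnt_s_def by (force simp: filter_empty_conv)

lemma mem_seen_actions_iff: "a \<in> seen_actions D s \<longleftrightarrow> (\<exists>s'. (s, a, s') \<in> set D)"
  unfolding seen_actions_def cnt_sa_def by (auto simp: filter_empty_conv)

lemma beta_neq_0_iff: "s \<in> fst ` set D \<Longrightarrow> beta D s a \<noteq> 0 \<longleftrightarrow> a \<in> seen_actions D s"
  using cnt_s_eq_0_iff[of D s] by (simp add: beta_def seen_actions_def)

lemma beta_nonneg: "beta D s a \<ge> 0"
  by (simp add: beta_def)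

lemma Mdl_nonneg: "Mdl D s a s' \<ge> 0"
  by (simp add: Mdl_def)

lemma Mdl_eq_0_unseen: "a \<notin> seen_actions D s \<Longrightarrow> Mdl D s a s' = 0"
  by (simp add: Mdl_def seen_actions_def)

lemma Mdl_pos:
  assumes "(s, a, s') \<in> set D"
  shows "Mdl D s a s' > 0"
proof -
  have "cnt_sa D s a \<noteq> 0" "cnt_sas D s a s' \<noteq> 0"
    using assms mem_seen_actions_iff[of a D s]
    by (auto simp: seen_actions_def cnt_sas_def filter_empty_conv)
  then show ?thesis by (simp add: Mdl_def)
qed

lemma Mpol_pos_if_pmf_pos:
  assumes "(s, a, s') \<in> set D" "pmf (\<pi> s) a > 0"
  shows "Mpol D \<pi> s s' > 0"
proof -
  have "0 < pmf (\<pi> s) a * Mdl D s a s'"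
    using assms(2) Mdl_pos[OF assms(1)] by simp
  also have "\<dots> \<le> Mpol D \<pi> s s'"
    unfolding Mpol_def by (rule member_le_sum) (auto simp: Mdl_nonneg)
  finally show ?thesis .
qed

lemma Mpol_pos_imp_seen:
  assumes "Mpol D \<pi> s s' > 0"
  shows "set_pmf (\<pi> s) \<inter> seen_actions D s \<noteq> {}"
proof
  assume disjoint: "set_pmf (\<pi> s) \<inter> seen_actions D s = {}"
  have "pmf (\<pi> s) a * Mdl D s a s' = 0" for a
  proof (cases "a \<in> set_pmf (\<pi> s)")
    case True
    then have "a \<notin> seen_actions D s" using disjoint by blast
    then show ?thesis by (simp add: Mdl_eq_0_unseen)
  next
    case False
    then show ?thesis by (simp add: set_pmf_iff)
  qed
  then have "Mpol D \<pi> s s' = 0"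
    unfolding Mpol_def by (intro sum.neutral) blast
  then show False
    using assms by simp
qed

lemma Mpol_cond_seen_actions:
  assumes "set_pmf (\<pi> s) \<inter> seen_actions D s \<noteq> {}"
  shows "Mpol D (\<pi>(s := cond_pmf (\<pi> s) (seen_actions D s))) s s'
         = Mpol D \<pi> s s' / measure_pmf.prob (\<pi> s) (seen_actions D s)"
  unfolding Mpol_def sum_divide_distrib
  by (intro sum.cong refl) (auto simp: pmf_cond[OF assms] Mdl_eq_0_unseen)

lemma sum_list_ereal_neq_PInf:
  fixes f :: "'b \<Rightarrow> ereal"
  shows "\<forall>x\<in>set xs. f x \<noteq> \<infinity> \<Longrightarrow> sum_list (map f xs) \<noteq> \<infinity>"
  by (induction xs) auto

lemma sum_list_ereal_eq_MInf:
  fixes f :: "'b \<Rightarrow> ereal"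
  assumes "\<forall>x\<in>set xs. f x \<noteq> \<infinity>" "x \<in> set xs" "f x = -\<infinity>"
  shows "sum_list (map f xs) = -\<infinity>"
proof -
  have "sum_list (map f (remove1 x xs)) \<noteq> \<infinity>"
    using assms(1) set_remove1_subset[of x xs] by (intro sum_list_ereal_neq_PInf) blast
  then show ?thesis
    using assms(3) by (simp add: sum_list_map_remove1[OF assms(2)])
qed

lemma weighted_loglik_eq_real:
  assumes "D \<noteq> []" "\<And>s a s'. (s, a, s') \<in> set D \<Longrightarrow> Mpol D \<pi> s s' > 0"
  shows "weighted_loglik D w \<pi>
         = ereal (sum_list (map (\<lambda>(s, a, s'). w s s' * ln (Mpol D \<pi> s s')) D) / real (length D))"
proof -
  let ?f = "\<lambda>(s, a, s'). w s s' * ln (Mpol D \<pi> s s')"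
  have "sum_list (map (\<lambda>(s, a, s'). ereal (w s s') * elog (Mpol D \<pi> s s')) D)
        = sum_list (map (\<lambda>x. ereal (?f x)) D)"
    using assms(2) by (intro arg_cong[where f = sum_list] map_cong) (auto simp: elog_def)
  then show ?thesis
    using assms(1) by (simp add: weighted_loglik_def avgD_def)
qed

lemma weighted_loglik_eq_MInf:
  assumes w_pos: "\<And>s a s'. (s, a, s') \<in> set D \<Longrightarrow> w s s' > 0"
    and "(s, a, s') \<in> set D" "\<not> Mpol D \<pi> s s' > 0"
  shows "weighted_loglik D w \<pi> = -\<infinity>"
proof -
  let ?term = "\<lambda>(s, a, s'). ereal (w s s') * elog (Mpol D \<pi> s s')"
  have "?term (s1, a1, s1') \<noteq> \<infinity>" if "(s1, a1, s1') \<in> set D" for s1 a1 s1'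
    using w_pos[OF that] by (auto simp: elog_def)
  moreover have "?term (s, a, s') = -\<infinity>"
    using assms(3) w_pos[OF assms(2)] by (simp add: elog_def)
  ultimately have "sum_list (map ?term D) = -\<infinity>"
    using assms(2) by (intro sum_list_ereal_eq_MInf) fastforce+
  then show ?thesis
    using assms(2) by (auto simp: weighted_loglik_def avgD_def)
qed

lemma weighted_loglik_strict_mono:
  fixes D :: "('s, 'a::finite) dataset"
  assumes w_pos: "\<And>s a s'. (s, a, s') \<in> set D \<Longrightarrow> w s s' > 0"
    and pos: "\<And>s a s'. (s, a, s') \<in> set D \<Longrightarrow> Mpol D \<pi> s s' > 0"
    and le: "\<And>s a s'. (s, a, s') \<in> set D \<Longrightarrow> Mpol D \<pi> s s' \<le> Mpol D \<pi>' s s'"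
    and x: "(s, a, s') \<in> set D" "Mpol D \<pi> s s' < Mpol D \<pi>' s s'"
  shows "weighted_loglik D w \<pi> < weighted_loglik D w \<pi>'"
proof -
  define f where "f \<pi> = (\<lambda>(s, a :: 'a, s'). w s s' * ln (Mpol D \<pi> s s'))" for \<pi>
  have pos': "Mpol D \<pi>' s s' > 0" if "(s, a, s') \<in> set D" for s a s'
    using pos[OF that] le[OF that] by linarith
  have le_triple: "f \<pi> (s1, a1, s1') \<le> f \<pi>' (s1, a1, s1')" if "(s1, a1, s1') \<in> set D" for s1 a1 s1'
    using pos[OF that] le[OF that] w_pos[OF that] by (simp add: f_def)
  have le_f: "f \<pi> y \<le> f \<pi>' y" if "y \<in> set (remove1 (s, a, s') D)" for y
    by (metis le_triple prod_cases3 set_remove1_subset subsetD that)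
  have "sum_list (map (f \<pi>) D) = f \<pi> (s, a, s') + sum_list (map (f \<pi>) (remove1 (s, a, s') D))"
    using sum_list_map_remove1[OF x(1)] .
  also have "\<dots> < f \<pi>' (s, a, s') + sum_list (map (f \<pi>') (remove1 (s, a, s') D))"
    using x pos[OF x(1)] w_pos[OF x(1)] le_f
    by (intro add_less_le_mono sum_list_mono) (simp_all add: f_def)
  also have "\<dots> = sum_list (map (f \<pi>') D)"
    by (rule sum_list_map_remove1[OF x(1), symmetric])
  finally have "sum_list (map (f \<pi>) D) < sum_list (map (f \<pi>') D)" .
  moreover have "D \<noteq> []" using x(1) by auto
  ultimately show ?thesis
    using pos pos' by (simp add: weighted_loglik_eq_real f_def divide_strict_right_mono)
qed

lemma maximizer_Mpol_pos:
  assumes w_pos: "\<And>s a s'. (s, a, s') \<in> set D \<Longrightarrow> w s s' > 0"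
    and max: "\<forall>\<pi>. weighted_loglik D w \<pi> \<le> weighted_loglik D w \<pi>s"
    and "(s, a, s') \<in> set D"
  shows "Mpol D \<pi>s s s' > 0"
proof (rule ccontr)
  \<comment> \<open>At states outside \<open>D\<close> this is \<open>pmf_of_set {}\<close>, a junk value that the objective never sees.\<close>
  define \<pi>0 where "\<pi>0 s = pmf_of_set (seen_actions D s)" for s
  have "Mpol D \<pi>0 s s' > 0" if "(s, a, s') \<in> set D" for s a s'
  proof (rule Mpol_pos_if_pmf_pos[OF that])
    have "a \<in> seen_actions D s" "finite (seen_actions D s)"
      using that mem_seen_actions_iff[of a D s] by auto
    then show "pmf (\<pi>0 s) a > 0"
      unfolding \<pi>0_def by (subst pmf_of_set) (auto simp: card_gt_0_iff)
  qed
  moreover have "D \<noteq> []"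
    using assms(3) by auto
  ultimately have "weighted_loglik D w \<pi>0 \<noteq> -\<infinity>"
    using weighted_loglik_eq_real[of D \<pi>0 w] by auto
  moreover assume "\<not> Mpol D \<pi>s s s' > 0"
  with w_pos assms(3) have "weighted_loglik D w \<pi>s = -\<infinity>"
    by (rule weighted_loglik_eq_MInf)
  ultimately show False
    using max by (metis ereal_infty_less_eq(2))
qed

theorem maximizer_support_subset_seen_actions:
  assumes w_pos: "\<And>s a s'. (s, a, s') \<in> set D \<Longrightarrow> w s s' > 0"
    and max: "\<forall>\<pi>. weighted_loglik D w \<pi> \<le> weighted_loglik D w \<pi>s"
    and "s \<in> fst ` set D"
  shows "set_pmf (\<pi>s s) \<subseteq> seen_actions D s"
proof (rule ccontr)
  assume "\<not> ?thesis"
  then obtain a0 where a0: "a0 \<in> set_pmf (\<pi>s s)" "a0 \<notin> seen_actions D s" by auto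
  obtain a s' where t: "(s, a, s') \<in> set D" using assms(3) by auto
  let ?G = "seen_actions D s" and ?P = "measure_pmf.prob (\<pi>s s) (seen_actions D s)"
  define \<pi>' where "\<pi>' = \<pi>s(s := cond_pmf (\<pi>s s) ?G)"
  have pos: "Mpol D \<pi>s s1 s1' > 0" if "(s1, a1, s1') \<in> set D" for s1 a1 s1'
    using maximizer_Mpol_pos[OF w_pos max that] .
  have G: "set_pmf (\<pi>s s) \<inter> ?G \<noteq> {}"
    using Mpol_pos_imp_seen[OF pos[OF t]] .
  have "?P > 0" using G by (auto intro: measure_pmf_posI)
  moreover have "?P < 1"
  proof -
    have "measure_pmf.prob (\<pi>s s) (- ?G) > 0"
      using a0 by (intro measure_pmf_posI) auto
    then show ?thesis
      using measure_pmf.prob_compl[of ?G "\<pi>s s"] by (simp add: Compl_eq_Diff_UNIV)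
  qed
  ultimately have grow: "Mpol D \<pi>s s y < Mpol D \<pi>' s y" if "Mpol D \<pi>s s y > 0" for y
    using that Mpol_cond_seen_actions[where \<pi> = \<pi>s and s = s and D = D and s' = y, OF G]
    by (simp add: \<pi>'_def less_divide_eq)
  have le: "Mpol D \<pi>s s1 s1' \<le> Mpol D \<pi>' s1 s1'" if "(s1, a1, s1') \<in> set D" for s1 a1 s1'
  proof (cases "s1 = s")
    case True
    then show ?thesis using grow pos[OF that] by (simp add: less_imp_le)
  next
    case False
    then show ?thesis by (simp add: \<pi>'_def Mpol_def)
  qed
  have "weighted_loglik D w \<pi>s < weighted_loglik D w \<pi>'"
    by (rule weighted_loglik_strict_mono[OF w_pos pos le t grow[OF pos[OF t]]])
  then show False
    using max by (simp add: not_le[symmetric])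
qed

lemma Zfun_pos:
  assumes "(s, a, s') \<in> set D"
  shows "Zfun D \<alpha> V s > 0"
proof -
  have "beta D s a > 0"
    using assms beta_neq_0_iff[of s D a] mem_seen_actions_iff[of a D s] beta_nonneg[of D s a]
    by force
  then have "0 < exp (\<alpha> * V s') * (beta D s a * Mdl D s a s')"
    using Mdl_pos[OF assms] by simp
  also have "\<dots> \<le> exp (\<alpha> * V s') * Nmdl D s s'"
    unfolding Nmdl_def
    by (intro mult_left_mono member_le_sum) (auto simp: beta_nonneg Mdl_nonneg)
  also have "\<dots> \<le> Zfun D \<alpha> V s"
    unfolding Zfun_def Nmdl_def
    by (rule member_le_sum) (auto intro!: sum_nonneg mult_nonneg_nonneg simp: beta_nonneg Mdl_nonneg)
  finally show ?thesis .
qed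

theorem proposition2:
  fixes D :: "('s::finite, 'a::finite) dataset"
    and V :: "'s \<Rightarrow> real" and \<alpha> :: real
    and \<pi>star \<pi>1star :: "'s \<Rightarrow> 'a pmf"
  assumes "0 \<le> \<alpha>"
    and "\<forall>\<pi>. Rbar D \<alpha> V \<pi> \<le> Rbar D \<alpha> V \<pi>star"
    and "\<forall>\<pi>. Rbar1 D \<alpha> V \<pi> \<le> Rbar1 D \<alpha> V \<pi>1star"
  shows "\<forall>s \<in> fst ` set D.
           set_pmf (\<pi>star s) \<subseteq> {a. beta D s a \<noteq> 0} \<and>
           set_pmf (\<pi>1star s) \<subseteq> {a. beta D s a \<noteq> 0}"
proof
  fix s assume s: "s \<in> fst ` set D"
  have "Rbar D \<alpha> V = weighted_loglik D (\<lambda>s s'. exp (\<alpha> * V s') / Zfun D \<alpha> V s)"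
    by (simp add: fun_eq_iff Rbar_def weighted_loglik_def)
  then have "set_pmf (\<pi>star s) \<subseteq> seen_actions D s"
    using assms(2) s
    by (intro maximizer_support_subset_seen_actions) (auto intro: divide_pos_pos Zfun_pos)
  moreover have "Rbar1 D \<alpha> V = weighted_loglik D (\<lambda>s s'. exp (\<alpha> * V s') / exp (\<alpha> * V s))"
    by (simp add: fun_eq_iff Rbar1_def weighted_loglik_def)
  then have "set_pmf (\<pi>1star s) \<subseteq> seen_actions D s"
    using assms(3) s by (intro maximizer_support_subset_seen_actions) auto
  ultimately show "set_pmf (\<pi>star s) \<subseteq> {a. beta D s a \<noteq> 0} \<and>
                   set_pmf (\<pi>1star s) \<subseteq> {a. beta D s a \<noteq> 0}"
    using beta_neq_0_iff[OF s] by blast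
qed

end
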